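(* Let $\mathfrak c\in\mathfrak C$ and let $h$ be a bounded measurable function on $\mathbb R$. Then the series $\sum_{i=1}^{N_+}\mathcal E^+_{\mathfrak c,i}h-\sum_{i=1}^{N_-}\mathcal E^-_{\mathfrak c,i}h$ converges in $L^2(\mathbb R^2)$, so that $\mathcal E_{\mathfrak c}h:=\sum_{i=1}^{N_+}\mathcal E^+_{\mathfrak c,i}h-\sum_{i=1}^{N_-}\mathcal E^-_{\mathfrak c,i}h\in L^2(\mathbb R^2)$.
   Context: $\mathfrak C$ is the set of smooth maps $\mathfrak c=(\mathfrak c_1,\mathfrak c_2):\mathbb R\to\mathbb R^2$ with $\operatorname{supp}\dot{\mathfrak c}\subset[0,1]$ and $\mathfrak c_1(t)>0$ for all $t$. Let $T_\pm=\{t\in(0,1):\pm\dot{\mathfrak c}_2(t)>0\}$; each is a disjoint union of at most countably many open intervals, $T_\pm=\bigcup_{i=1}^{N_\pm}I_{\pm,i}$ with $N_\pm\in\mathbb N\cup\{\infty\}$ (on each $I_{\pm,i}$, $\mathfrak c_2$ is strictly monotone). For $x=(x_1,x_2)\in\mathbb R^2$ define $(\mathcal E^\pm_{\mathfrak c,i}h)(x):=h(t)$ if there is $t\in I_{\pm,i}$ with $\mathfrak c_2(t)=x_2$ and $0\le x_1\le\mathfrak c_1(t)$, and $(\mathcal E^\pm_{\mathfrak c,i}h)(x):=0$ otherwise. *)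

theory Defs
  imports "HOL-Analysis.Analysis" "HOL-Library.Extended_Nat"
begin

definition smooth_fun :: "(real \<Rightarrow> real) \<Rightarrow> bool" where
  "smooth_fun f \<longleftrightarrow> (\<forall>k. \<forall>t. ((deriv ^^ k) f) differentiable (at t))"

definition curve_class :: "(real \<Rightarrow> real) \<Rightarrow> (real \<Rightarrow> real) \<Rightarrow> bool" where
  "curve_class c1 c2 \<longleftrightarrow> smooth_fun c1 \<and> smooth_fun c2
     \<and> closure {t. deriv c1 t \<noteq> 0 \<or> deriv c2 t \<noteq> 0} \<subseteq> {0..1}
     \<and> (\<forall>t. c1 t > 0)"

definition T_plus :: "(real \<Rightarrow> real) \<Rightarrow> real set" where
  "T_plus c2 = {t \<in> {0<..<1}. deriv c2 t > 0}"

definition T_minus :: "(real \<Rightarrow> real) \<Rightarrow> real set" where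
  "T_minus c2 = {t \<in> {0<..<1}. deriv c2 t < 0}"

definition E_op :: "real set \<Rightarrow> (real \<Rightarrow> real) \<Rightarrow> (real \<Rightarrow> real) \<Rightarrow> (real \<Rightarrow> real)
                     \<Rightarrow> real \<times> real \<Rightarrow> real" where
  "E_op I c1 c2 h x =
     (if \<exists>t\<in>I. c2 t = snd x \<and> 0 \<le> fst x \<and> fst x \<le> c1 t
      then h (SOME t. t \<in> I \<and> c2 t = snd x \<and> 0 \<le> fst x \<and> fst x \<le> c1 t)
      else 0)"

definition L2_fun :: "(real \<times> real \<Rightarrow> real) \<Rightarrow> bool" where
  "L2_fun f \<longleftrightarrow> f \<in> borel_measurable lborel \<and> integrable lborel (\<lambda>x. (f x)\<^sup>2)"

definition L2_tendsto :: "(nat \<Rightarrow> real \<times> real \<Rightarrow> real) \<Rightarrow> (real \<times> real \<Rightarrow> real) \<Rightarrow> bool" where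
  "L2_tendsto S F \<longleftrightarrow>
     ((\<lambda>n. \<integral>\<^sup>+ x. ennreal ((S n x - F x)\<^sup>2) \<partial>lborel) \<longlongrightarrow> 0) sequentially"

end

theory Submission
  imports Defs
begin

text \<open>
  On a component I of T_+ or T_-, c_2 is strictly monotone, so E_I h is h composed with the
  inverse of c_2 on the region under the graph of c_1; hence it is measurable and vanishes
  outside a box of width max c_1. At a = inf I the derivative of c_2 vanishes (a is a boundary
  point of T_\<plusminus> in (0,1), or a = 0), so by Taylor c_2 stays within M |I|^2 of c_2(a) on I, where
  M bounds |c_2''|. Hence |E_I h| \<le> B 1_K with |K| \<le> C |I|^2. The components are disjoint
  in [0,1], so \<Sum> |I_i| \<le> 1, and the square integral of a tail is at most
  \<Sum>_{i,j} |K_i \<inter> K_j| \<le> C \<Sum>_{i,j} min(|I_i|,|I_j|)^2 \<le> C (\<Sum> |I_i|)^2, which tends to 0.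
\<close>

section \<open>Square-integrable limits of dominated series\<close>

lemma suminf_tail_square_le:
  fixes e g :: "nat \<Rightarrow> real"
  assumes dom: "\<And>i. \<bar>e i\<bar> \<le> g i"
  shows "ennreal (((\<Sum>i<n. e i) - lim (\<lambda>m. \<Sum>i<m. e i))\<^sup>2) \<le> (\<Sum>i. ennreal (g (i + n)))\<^sup>2"
proof (cases "(\<Sum>i. ennreal (g (i + n))) = top")
  case True
  then show ?thesis by simp
next
  case False
  have g0: "0 \<le> g i" for i using dom[of i] by linarith
  have sg': "summable (\<lambda>i. g (i + n))" using False g0 by (intro summable_suminf_not_top) auto
  then have sg: "summable g" by (simp add: summable_iff_shift)
  have se: "summable e" using dom by (intro summable_comparison_test'[OF sg]) auto
  have "(\<lambda>m. \<Sum>i<m. e i) \<longlonglongrightarrow> suminf e" using se by (rule summable_LIMSEQ)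
  then have "(\<Sum>i<n. e i) - lim (\<lambda>m. \<Sum>i<m. e i) = - (\<Sum>i. e (i + n))"
    using suminf_minus_initial_segment[OF se] by (simp add: limI)
  moreover have "\<bar>\<Sum>i. e (i + n)\<bar> \<le> (\<Sum>i. g (i + n))"
  proof -
    have sa: "summable (\<lambda>i. \<bar>e (i + n)\<bar>)"
      using dom by (intro summable_comparison_test'[OF sg']) auto
    have "\<bar>\<Sum>i. e (i + n)\<bar> \<le> (\<Sum>i. \<bar>e (i + n)\<bar>)" using summable_rabs[OF sa] .
    also have "\<dots> \<le> (\<Sum>i. g (i + n))" using dom by (intro suminf_le sa sg') auto
    finally show ?thesis .
  qed
  ultimately have "((\<Sum>i<n. e i) - lim (\<lambda>m. \<Sum>i<m. e i))\<^sup>2 \<le> (\<Sum>i. g (i + n))\<^sup>2"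
    by (simp add: abs_le_square_iff[symmetric])
  moreover have "(\<Sum>i. ennreal (g (i + n))) = ennreal (\<Sum>i. g (i + n))"
    using sg' g0 by (intro suminf_ennreal2) auto
  moreover have "0 \<le> (\<Sum>i. g (i + n))" using sg' g0 by (intro suminf_nonneg) auto
  ultimately show ?thesis by (simp add: ennreal_power ennreal_leI)
qed

lemma L2_limit_of_dominated_series:
  fixes e g :: "nat \<Rightarrow> 'a \<Rightarrow> real"
  assumes meas: "\<And>i. e i \<in> borel_measurable M"
    and dom: "\<And>i x. \<bar>e i x\<bar> \<le> g i x"
    and tail: "(\<lambda>n. \<integral>\<^sup>+x. (\<Sum>i. ennreal (g (i + n) x))\<^sup>2 \<partial>M) \<longlonglongrightarrow> 0"
    and square_integrable: "(\<integral>\<^sup>+x. (\<Sum>i. ennreal (g i x))\<^sup>2 \<partial>M) < \<infinity>"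
  shows "\<exists>F. F \<in> borel_measurable M \<and> integrable M (\<lambda>x. (F x)\<^sup>2)
           \<and> (\<lambda>n. \<integral>\<^sup>+x. ennreal (((\<Sum>i<n. e i x) - F x)\<^sup>2) \<partial>M) \<longlonglongrightarrow> 0"
proof (intro exI conjI)
  define F where "F x = lim (\<lambda>n. \<Sum>i<n. e i x)" for x
  have tail_le: "(\<integral>\<^sup>+x. ennreal (((\<Sum>i<n. e i x) - F x)\<^sup>2) \<partial>M)
      \<le> (\<integral>\<^sup>+x. (\<Sum>i. ennreal (g (i + n) x))\<^sup>2 \<partial>M)" for n
    unfolding F_def using dom by (intro nn_integral_mono suminf_tail_square_le)
  show "F \<in> borel_measurable M"
    unfolding F_def using meas by (intro borel_measurable_lim_metric) measurable
  then show "integrable M (\<lambda>x. (F x)\<^sup>2)"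
  proof (rule integrableI_bounded[OF borel_measurable_power])
    show "(\<integral>\<^sup>+x. ennreal (norm ((F x)\<^sup>2)) \<partial>M) < \<infinity>"
      using tail_le[of 0] square_integrable by simp
  qed
  show "(\<lambda>n. \<integral>\<^sup>+x. ennreal (((\<Sum>i<n. e i x) - F x)\<^sup>2) \<partial>M) \<longlonglongrightarrow> 0"
    using tail_le by (intro tendsto_sandwich[OF _ _ tendsto_const tail]) auto
qed

lemma nn_integral_square_suminf_indicator_le:
  fixes K :: "nat \<Rightarrow> 'a set" and w :: "nat \<Rightarrow> real"
  assumes K: "\<And>i. K i \<in> sets M"
    and area: "\<And>i. emeasure M (K i) \<le> ennreal (C * (w i)\<^sup>2)"
    and w: "\<And>i. 0 \<le> w i" and C: "0 \<le> C"
  shows "(\<integral>\<^sup>+x. (\<Sum>i. indicator (K i) x)\<^sup>2 \<partial>M) \<le> ennreal C * (\<Sum>i. ennreal (w i))\<^sup>2"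
proof -
  let ?f = "\<lambda>i x. indicator (K i) x :: ennreal"
  have overlap: "emeasure M (K i \<inter> K j) \<le> ennreal C * (ennreal (w i) * ennreal (w j))" for i j
  proof -
    have "emeasure M (K i \<inter> K j) \<le> min (emeasure M (K i)) (emeasure M (K j))"
      using K by (auto intro: emeasure_mono)
    also have "\<dots> \<le> ennreal (C * (w i * w j))"
    proof (cases "w i \<le> w j")
      case True
      then have "C * (w i)\<^sup>2 \<le> C * (w i * w j)"
        using w C by (simp add: power2_eq_square mult_left_mono)
      then show ?thesis using area[of i] by (auto intro: min.coboundedI1 order_trans ennreal_leI)
    next
      case False
      then have "C * (w j)\<^sup>2 \<le> C * (w i * w j)"
        using w C by (simp add: power2_eq_square mult_left_mono mult_right_mono)
      then show ?thesis using area[of j] by (auto intro: min.coboundedI2 order_trans ennreal_leI)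
    qed
    finally show ?thesis using w C by (simp add: ennreal_mult)
  qed
  have "(\<integral>\<^sup>+x. (\<Sum>i. ?f i x)\<^sup>2 \<partial>M) = (\<integral>\<^sup>+x. (\<Sum>i. \<Sum>j. ?f i x * ?f j x) \<partial>M)"
    by (simp add: power2_eq_square)
  also have "\<dots> = (\<Sum>i. \<integral>\<^sup>+x. (\<Sum>j. ?f i x * ?f j x) \<partial>M)"
    by (intro nn_integral_suminf) (use K in measurable)
  also have "\<dots> = (\<Sum>i. \<Sum>j. \<integral>\<^sup>+x. ?f i x * ?f j x \<partial>M)"
    by (intro suminf_cong nn_integral_suminf) (use K in measurable)
  also have "\<dots> = (\<Sum>i. \<Sum>j. emeasure M (K i \<inter> K j))"
    using K by (simp add: indicator_inter_arith[symmetric])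
  also have "\<dots> \<le> (\<Sum>i. \<Sum>j. ennreal C * (ennreal (w i) * ennreal (w j)))"
    by (intro suminf_le allI summableI overlap)
  also have "\<dots> = ennreal C * (\<Sum>i. ennreal (w i))\<^sup>2"
    by (simp add: power2_eq_square mult.assoc)
  finally show ?thesis .
qed

lemma suminf_shift_tendsto_zero:
  fixes w :: "nat \<Rightarrow> real"
  assumes "summable w"
  shows "(\<lambda>n. \<Sum>i. w (i + n)) \<longlonglongrightarrow> 0"
proof -
  have "(\<lambda>n. (\<Sum>i. w i) - (\<Sum>i<n. w i)) \<longlonglongrightarrow> (\<Sum>i. w i) - (\<Sum>i. w i)"
    by (intro tendsto_diff tendsto_const summable_LIMSEQ assms)
  then show ?thesis using suminf_minus_initial_segment[OF assms] by simp
qed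

lemma L2_limit_of_series_dominated_by_sets:
  fixes e :: "nat \<Rightarrow> 'a \<Rightarrow> real" and K :: "nat \<Rightarrow> 'a set" and w :: "nat \<Rightarrow> real"
  assumes meas: "\<And>i. e i \<in> borel_measurable M"
    and dom: "\<And>i x. \<bar>e i x\<bar> \<le> B * indicator (K i) x"
    and K: "\<And>i. K i \<in> sets M"
    and area: "\<And>i. emeasure M (K i) \<le> ennreal (C * (w i)\<^sup>2)"
    and w: "\<And>i. 0 \<le> w i" "summable w"
    and B: "0 \<le> B" and C: "0 \<le> C"
  shows "\<exists>F. F \<in> borel_measurable M \<and> integrable M (\<lambda>x. (F x)\<^sup>2)
           \<and> (\<lambda>n. \<integral>\<^sup>+x. ennreal (((\<Sum>i<n. e i x) - F x)\<^sup>2) \<partial>M) \<longlonglongrightarrow> 0"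
proof (rule L2_limit_of_dominated_series[OF meas dom])
  define r where "r n = (\<Sum>i. w (i + n))" for n
  have r: "0 \<le> r n" for n
    unfolding r_def using w by (intro suminf_nonneg) (auto simp: summable_iff_shift)
  have tail_le: "(\<integral>\<^sup>+x. (\<Sum>i. ennreal (B * indicator (K (i + n)) x))\<^sup>2 \<partial>M)
      \<le> ennreal (B\<^sup>2 * C * (r n)\<^sup>2)" for n
  proof -
    have "(\<integral>\<^sup>+x. (\<Sum>i. ennreal (B * indicator (K (i + n)) x))\<^sup>2 \<partial>M)
        = ennreal (B\<^sup>2) * (\<integral>\<^sup>+x. (\<Sum>i. indicator (K (i + n)) x)\<^sup>2 \<partial>M)"
      using B by (subst nn_integral_cmult[symmetric], use K in measurable)
        (simp add: ennreal_mult ennreal_indicator ennreal_suminf_cmult power_mult_distrib ennreal_power)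
    also have "\<dots> \<le> ennreal (B\<^sup>2) * (ennreal C * (\<Sum>i. ennreal (w (i + n)))\<^sup>2)"
      using K area w C by (intro mult_left_mono nn_integral_square_suminf_indicator_le) auto
    also have "(\<Sum>i. ennreal (w (i + n))) = ennreal (r n)"
      unfolding r_def using w by (intro suminf_ennreal2) (auto simp: summable_iff_shift)
    also have "ennreal (B\<^sup>2) * (ennreal C * (ennreal (r n))\<^sup>2) = ennreal (B\<^sup>2 * C * (r n)\<^sup>2)"
      using C r by (simp add: ennreal_mult ennreal_power mult.assoc)
    finally show ?thesis .
  qed
  have "(\<lambda>n. B\<^sup>2 * C * (r n)\<^sup>2) \<longlonglongrightarrow> B\<^sup>2 * C * 0\<^sup>2"
    unfolding r_def by (intro tendsto_intros suminf_shift_tendsto_zero w)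
  then have "(\<lambda>n. B\<^sup>2 * C * (r n)\<^sup>2) \<longlonglongrightarrow> 0" by simp
  then have "(\<lambda>n. ennreal (B\<^sup>2 * C * (r n)\<^sup>2)) \<longlonglongrightarrow> ennreal 0"
    by (rule tendsto_ennrealI)
  then have lim: "(\<lambda>n. ennreal (B\<^sup>2 * C * (r n)\<^sup>2)) \<longlonglongrightarrow> 0" by simp
  show "(\<lambda>n. \<integral>\<^sup>+x. (\<Sum>i. ennreal (B * indicator (K (i + n)) x))\<^sup>2 \<partial>M) \<longlonglongrightarrow> 0"
    by (rule tendsto_sandwich[OF _ _ tendsto_const lim]) (auto intro: always_eventually tail_le)
  show "(\<integral>\<^sup>+x. (\<Sum>i. ennreal (B * indicator (K i) x))\<^sup>2 \<partial>M) < \<infinity>"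
    using le_less_trans[OF tail_le[of 0]] by simp
qed

lemma L2_limit_of_difference_of_set_dominated_series:
  fixes ep em :: "nat \<Rightarrow> 'a \<Rightarrow> real" and Kp Km :: "nat \<Rightarrow> 'a set" and wp wm :: "nat \<Rightarrow> real"
  assumes meas: "\<And>i. ep i \<in> borel_measurable M" "\<And>i. em i \<in> borel_measurable M"
    and dom: "\<And>i x. \<bar>ep i x\<bar> \<le> B * indicator (Kp i) x" "\<And>i x. \<bar>em i x\<bar> \<le> B * indicator (Km i) x"
    and K: "\<And>i. Kp i \<in> sets M" "\<And>i. Km i \<in> sets M"
    and area: "\<And>i. emeasure M (Kp i) \<le> ennreal (C * (wp i)\<^sup>2)"
      "\<And>i. emeasure M (Km i) \<le> ennreal (C * (wm i)\<^sup>2)"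
    and w: "\<And>i. 0 \<le> wp i" "\<And>i. 0 \<le> wm i" "summable wp" "summable wm"
    and B: "0 \<le> B" and C: "0 \<le> C"
  shows "\<exists>F. F \<in> borel_measurable M \<and> integrable M (\<lambda>x. (F x)\<^sup>2)
           \<and> (\<lambda>n. \<integral>\<^sup>+x. ennreal (((\<Sum>i<n. ep i x) - (\<Sum>i<n. em i x) - F x)\<^sup>2) \<partial>M) \<longlonglongrightarrow> 0"
proof -
  have dom_union: "\<bar>ep i x - em i x\<bar> \<le> (2 * B) * indicator (Kp i \<union> Km i) x" for i x
    using dom[of i x] dom(2)[of i x] B by (cases "x \<in> Km i"; cases "x \<in> Kp i") auto
  have area_union: "emeasure M (Kp i \<union> Km i) \<le> ennreal (C * (wp i + wm i)\<^sup>2)" for i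
  proof -
    have "emeasure M (Kp i \<union> Km i) \<le> emeasure M (Kp i) + emeasure M (Km i)"
      using K by (intro emeasure_subadditive)
    also have "\<dots> \<le> ennreal (C * (wp i)\<^sup>2) + ennreal (C * (wm i)\<^sup>2)"
      by (intro add_mono area)
    also have "\<dots> \<le> ennreal (C * (wp i + wm i)\<^sup>2)"
      using w(1,2)[of i] C
      by (simp add: ennreal_plus[symmetric] power2_sum mult_left_mono algebra_simps del: ennreal_plus)
    finally show ?thesis .
  qed
  have "\<exists>F. F \<in> borel_measurable M \<and> integrable M (\<lambda>x. (F x)\<^sup>2)
          \<and> (\<lambda>n. \<integral>\<^sup>+x. ennreal (((\<Sum>i<n. ep i x - em i x) - F x)\<^sup>2) \<partial>M) \<longlonglongrightarrow> 0"
    using meas K w B C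
    by (intro L2_limit_of_series_dominated_by_sets[OF _ dom_union _ area_union])
      (auto intro: summable_add add_nonneg_nonneg)
  then show ?thesis by (simp add: sum_subtractf)
qed

section \<open>The curve and the components of T_+ and T_-\<close>

lemma smooth_fun_has_real_derivative:
  assumes "smooth_fun f"
  shows "((deriv ^^ k) f has_real_derivative (deriv ^^ Suc k) f t) (at t)"
  using assms unfolding smooth_fun_def by (simp add: DERIV_deriv_iff_real_differentiable)

lemma smooth_fun_continuous_on:
  assumes "smooth_fun f"
  shows "continuous_on S ((deriv ^^ k) f)"
  using assms unfolding smooth_fun_def
  by (meson continuous_at_imp_continuous_on differentiable_imp_continuous_within)

lemma curve_class_deriv_eq_0:
  assumes "curve_class c1 c2" and "t \<le> 0"
  shows "deriv c2 t = 0"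
proof -
  have "continuous_on UNIV (deriv c2)"
    using smooth_fun_continuous_on[of c2 UNIV 1] assms(1) unfolding curve_class_def by simp
  then have "closed {t. deriv c2 t = 0}"
    by (intro closed_Collect_eq continuous_on_const)
  moreover have "{..<0} \<subseteq> {t. deriv c2 t = 0}"
  proof -
    have "closure {t. deriv c1 t \<noteq> 0 \<or> deriv c2 t \<noteq> 0} \<subseteq> {0..1}"
      using assms(1) unfolding curve_class_def by simp
    then have "{t. deriv c1 t \<noteq> 0 \<or> deriv c2 t \<noteq> 0} \<subseteq> {0..1}"
      by (rule order_trans[OF closure_subset])
    then show ?thesis by force
  qed
  ultimately have "closure {..<0::real} \<subseteq> {t. deriv c2 t = 0}"
    by (rule closure_minimal[rotated])
  with assms(2) show ?thesis by auto
qed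

definition T_sign :: "real \<Rightarrow> (real \<Rightarrow> real) \<Rightarrow> real set" where
  "T_sign s c2 = {t \<in> {0<..<1}. s * deriv c2 t > 0}"

lemma T_plus_eq_T_sign: "T_plus c2 = T_sign 1 c2"
  and T_minus_eq_T_sign: "T_minus c2 = T_sign (-1) c2"
  by (auto simp: T_plus_def T_minus_def T_sign_def)

lemma open_T_sign:
  assumes "smooth_fun c2"
  shows "open (T_sign s c2)"
proof -
  have "open {t. 0 < s * deriv c2 t}"
    using smooth_fun_continuous_on[OF assms, of UNIV 1]
    by (intro open_Collect_less) (auto intro!: continuous_intros)
  moreover have "T_sign s c2 = {0<..<1} \<inter> {t. 0 < s * deriv c2 t}"
    by (auto simp: T_sign_def)
  ultimately show ?thesis by auto
qed

lemma Inf_component_notin: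
  fixes S :: "real set"
  assumes S: "open S" and I: "I \<in> components S" and bdd: "bdd_below I"
  shows "Inf I \<notin> S"
proof
  assume "Inf I \<in> S"
  then obtain e where e: "e > 0" "ball (Inf I) e \<subseteq> S"
    using S open_contains_ball by blast
  have "Inf I \<in> closure I"
    using closure_contains_Inf[OF in_components_nonempty[OF I] bdd] .
  then obtain u where "u \<in> I" "dist u (Inf I) < e"
    using e(1) closure_approachable by blast
  then have "I \<inter> ball (Inf I) e \<noteq> {}" by (auto simp: dist_commute)
  then have "ball (Inf I) e \<subseteq> I" using components_maximal[OF I] e(2) by auto
  moreover have "Inf I - e / 2 \<in> ball (Inf I) e" using e(1) by (auto simp: dist_real_def)
  ultimately have "Inf I - e / 2 \<in> I" by blast
  then have "Inf I \<le> Inf I - e / 2" using bdd by (rule cInf_lower)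
  with e(1) show False by simp
qed

lemma bdd_below_component_T_sign:
  assumes "I \<in> components (T_sign s c2)"
  shows "bdd_below I"
  by (rule bdd_belowI[of _ 0]) (use in_components_subset[OF assms] in \<open>auto simp: T_sign_def\<close>)

lemma emeasure_T_sign_finite: "emeasure lborel (T_sign s c2) < \<infinity>"
proof -
  have "emeasure lborel (T_sign s c2) \<le> emeasure lborel {0..1::real}"
    by (intro emeasure_mono) (auto simp: T_sign_def)
  then show ?thesis by (simp add: le_less_trans)
qed

lemma component_T_sign_Inf:
  assumes cc: "curve_class c1 c2" and I: "I \<in> components (T_sign s c2)"
  shows "0 \<le> Inf I" and "deriv c2 (Inf I) = 0"
proof -
  have smooth: "smooth_fun c2" using cc by (simp add: curve_class_def)
  have sub: "I \<subseteq> T_sign s c2" using I by (rule in_components_subset)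
  obtain t where t: "t \<in> I" using in_components_nonempty[OF I] by blast
  have bdd: "bdd_below I" using I by (rule bdd_below_component_T_sign)
  have cl: "Inf I \<in> closure I" using closure_contains_Inf[OF in_components_nonempty[OF I] bdd] .
  have "closure I \<subseteq> closure {0<..<1::real}" using sub by (intro closure_mono) (auto simp: T_sign_def)
  with cl show Inf0: "0 \<le> Inf I" by auto
  have "Inf I \<le> t" using t bdd by (rule cInf_lower)
  with t sub have Inf1: "Inf I < 1" by (auto simp: T_sign_def)
  have s: "s \<noteq> 0" using t sub by (auto simp: T_sign_def)
  have "continuous_on UNIV (deriv c2)" using smooth_fun_continuous_on[OF smooth, of UNIV 1] by simp
  then have "closed {t. 0 \<le> s * deriv c2 t}"
    by (intro closed_Collect_le continuous_intros)
  moreover have "I \<subseteq> {t. 0 \<le> s * deriv c2 t}" using sub by (auto simp: T_sign_def)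
  ultimately have "0 \<le> s * deriv c2 (Inf I)" using cl closure_minimal by blast
  moreover have "Inf I \<notin> T_sign s c2" by (rule Inf_component_notin[OF open_T_sign[OF smooth] I bdd])
  ultimately show "deriv c2 (Inf I) = 0"
    using Inf0 Inf1 s curve_class_deriv_eq_0[OF cc] by (cases "Inf I = 0") (auto simp: T_sign_def)
qed

lemma T_sign_component_strict:
  assumes smooth: "smooth_fun c2" and I: "I \<in> components (T_sign s c2)"
    and uv: "u \<in> I" "v \<in> I" "u < v"
  shows "0 < s * (c2 v - c2 u)"
proof -
  obtain z where z: "u < z" "z < v" "c2 v - c2 u = (v - u) * deriv c2 z"
    using MVT2[OF uv(3), of c2 "deriv c2"] smooth_fun_has_real_derivative[OF smooth, of 0] by auto
  have "is_interval I" using in_components_connected[OF I] by (simp add: is_interval_connected_1)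
  then have "z \<in> I" using uv z unfolding is_interval_1 by (meson less_imp_le)
  then have "0 < s * deriv c2 z" using in_components_subset[OF I] by (auto simp: T_sign_def)
  then have "0 < (v - u) * (s * deriv c2 z)" using uv(3) by simp
  then show ?thesis by (simp only: z(3) mult.left_commute)
qed

lemma diff_Inf_le_measure_interval:
  fixes I :: "real set"
  assumes I: "is_interval I" "emeasure lborel I < \<infinity>" "bdd_below I" and v: "v \<in> I"
  shows "v - Inf I \<le> measure lborel I"
proof -
  have "I \<in> sets lborel" using real_interval_borel_measurable[OF I(1)] by simp
  then have fin: "I \<in> fmeasurable lborel" using I(2) by (rule fmeasurableI)
  have "v - measure lborel I \<le> u" if u: "u \<in> I" for u
  proof (cases "u \<le> v")
    case True
    have "{u..v} \<subseteq> I" using I(1) u v unfolding is_interval_1 by fastforce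
    then have "measure lborel {u..v} \<le> measure lborel I"
      using fin by (intro measure_mono_fmeasurable) auto
    with True show ?thesis by simp
  next
    case False
    then show ?thesis using measure_nonneg[of lborel I] by linarith
  qed
  then have "v - measure lborel I \<le> Inf I" using v by (intro cInf_greatest) auto
  then show ?thesis by simp
qed

lemma summable_measure_components:
  fixes S :: "'a::euclidean_space set"
  assumes S: "open S" "emeasure lborel S < \<infinity>" and I: "bij_betw I J (components S)"
  shows "summable (\<lambda>i. measure lborel (if i \<in> J then I i else {}))"
proof -
  define D where "D i = (if i \<in> J then I i else {})" for i
  have comp: "I i \<in> components S" if "i \<in> J" for i using I that by (auto simp: bij_betw_def)
  have D_sets: "D i \<in> sets lborel" for i
    using open_components[OF S(1) comp] by (auto simp: D_def)
  have D_le: "emeasure lborel (D i) \<le> emeasure lborel S" for i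
    using in_components_subset[OF comp] S(1) by (auto simp: D_def intro!: emeasure_mono)
  have D_eq: "ennreal (measure lborel (D i)) = emeasure lborel (D i)" for i
    using le_less_trans[OF D_le[of i] S(2)] by (simp add: emeasure_eq_ennreal_measure)
  have "disjoint_family D"
    using I components_nonoverlap[OF comp comp]
    by (auto simp: disjoint_family_on_def D_def bij_betw_def inj_on_def)
  then have "(\<Sum>i. emeasure lborel (D i)) = emeasure lborel (\<Union>i. D i)"
    using D_sets by (intro suminf_emeasure) auto
  also have "\<dots> \<le> emeasure lborel S"
    using in_components_subset[OF comp] S(1) by (intro emeasure_mono) (auto simp: D_def)
  finally show ?thesis
    using S(2) unfolding D_eq[symmetric] D_def[symmetric]
    by (intro summable_suminf_not_top) (auto dest: le_less_trans)
qed

lemma abs_diff_le_of_deriv_vanishes: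
  fixes f f' f'' :: "real \<Rightarrow> real"
  assumes f: "\<And>t. (f has_real_derivative f' t) (at t)"
    and f': "\<And>t. (f' has_real_derivative f'' t) (at t)"
    and a: "f' a = 0" "a \<le> t" and M: "\<And>y. y \<in> {a..t} \<Longrightarrow> \<bar>f'' y\<bar> \<le> M"
  shows "\<bar>f t - f a\<bar> \<le> M * (t - a)\<^sup>2"
proof (cases "a = t")
  case False
  with a(2) have at: "a < t" by simp
  obtain z where z: "a < z" "z < t" "f t - f a = (t - a) * f' z"
    using MVT2[OF at, of f f'] f by blast
  obtain y where y: "a < y" "y < z" "f' z - f' a = (z - a) * f'' y"
    using MVT2[OF z(1), of f' f''] f' by blast
  have M0: "0 \<le> M" using M[of a] at by simp
  have "\<bar>f' z\<bar> \<le> (z - a) * M"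
    using y z a(1) M[of y] by (simp add: abs_mult mult_left_mono)
  also have "\<dots> \<le> (t - a) * M" using z M0 by (intro mult_right_mono) auto
  finally have "\<bar>f t - f a\<bar> \<le> (t - a) * ((t - a) * M)"
    using z(3) at by (simp add: abs_mult mult_left_mono)
  then show ?thesis by (simp add: power2_eq_square mult_ac)
qed simp

section \<open>The operators E_I\<close>

lemma E_op_empty: "E_op {} c1 c2 h = (\<lambda>x. 0)"
  by (simp add: E_op_def fun_eq_iff)

lemma E_op_eq_inv_into:
  assumes inj: "inj_on c2 I"
  shows "E_op I c1 c2 h x =
    (if snd x \<in> c2 ` I \<and> 0 \<le> fst x \<and> fst x \<le> c1 (inv_into I c2 (snd x))
     then h (inv_into I c2 (snd x)) else 0)"
proof (cases "snd x \<in> c2 ` I")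
  case True
  then obtain t where t: "t \<in> I" "c2 t = snd x" by auto
  then have inv: "inv_into I c2 (snd x) = t" using inv_into_f_f[OF inj t(1)] by simp
  have uniq: "t' = t" if "t' \<in> I" "c2 t' = snd x" for t'
    using inj_onD[OF inj _ that(1) t(1)] that(2) t(2) by simp
  show ?thesis
  proof (cases "0 \<le> fst x \<and> fst x \<le> c1 t")
    case True
    then have "(SOME t'. t' \<in> I \<and> c2 t' = snd x \<and> 0 \<le> fst x \<and> fst x \<le> c1 t') = t"
      using t uniq by (intro some_equality) blast+
    moreover have "\<exists>t'\<in>I. c2 t' = snd x \<and> 0 \<le> fst x \<and> fst x \<le> c1 t'" using True t by blast
    ultimately show ?thesis using True t(2) unfolding E_op_def inv by (simp add: rev_image_eqI[OF t(1)])
  next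
    case False
    then have "\<not> (\<exists>t'\<in>I. c2 t' = snd x \<and> 0 \<le> fst x \<and> fst x \<le> c1 t')" using uniq by blast
    then have "E_op I c1 c2 h x = 0" unfolding E_op_def by (rule if_not_P)
    with False show ?thesis unfolding inv by auto
  qed
next
  case False
  then have "\<not> (\<exists>t\<in>I. c2 t = snd x \<and> 0 \<le> fst x \<and> fst x \<le> c1 t)" by (auto simp: image_iff)
  then have "E_op I c1 c2 h x = 0" unfolding E_op_def by (rule if_not_P)
  with False show ?thesis by simp
qed

lemma inj_on_if_strict:
  fixes f :: "real \<Rightarrow> real"
  assumes "\<And>u v. u \<in> I \<Longrightarrow> v \<in> I \<Longrightarrow> u < v \<Longrightarrow> 0 < s * (f v - f u)"
  shows "inj_on f I"
  by (rule inj_onI) (metis assms diff_self linorder_neqE_linordered_idom mult_zero_right order_less_irrefl)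

lemma borel_measurable_inv_into_strict:
  fixes f :: "real \<Rightarrow> real"
  assumes strict: "\<And>u v. u \<in> I \<Longrightarrow> v \<in> I \<Longrightarrow> u < v \<Longrightarrow> 0 < s * (f v - f u)"
    and s: "s \<noteq> 0"
  shows "inv_into I f \<in> borel_measurable (restrict_space borel (f ` I))"
proof -
  have "mono_on (f ` I) (\<lambda>y. s * inv_into I f y)"
  proof (rule mono_onI)
    fix y1 y2 assume y: "y1 \<in> f ` I" "y2 \<in> f ` I" "y1 \<le> y2"
    define u v where "u = inv_into I f y1" and "v = inv_into I f y2"
    have uv: "u \<in> I" "v \<in> I" "f u = y1" "f v = y2"
      using y by (auto simp: u_def v_def intro: inv_into_into f_inv_into_f)
    show "s * u \<le> s * v"
    proof (rule ccontr)
      assume less: "\<not> s * u \<le> s * v"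
      consider "v < u" | "u < v" using less by fastforce
      then show False
      proof cases
        case 1
        then have "0 < s" using less by (auto simp: not_le mult_less_cancel_left)
        with strict[OF uv(2,1) 1] uv y(3) show False by (simp add: zero_less_mult_iff)
      next
        case 2
        then have "s < 0" using less by (auto simp: not_le mult_less_cancel_left)
        with strict[OF uv(1,2) 2] uv y(3) show False by (simp add: zero_less_mult_iff)
      qed
    qed
  qed
  then have "(\<lambda>y. s * inv_into I f y) \<in> borel_measurable (restrict_space borel (f ` I))"
    by (rule borel_measurable_mono_on_fnc)
  then have "(\<lambda>y. s * inv_into I f y / s) \<in> borel_measurable (restrict_space borel (f ` I))"
    by measurable
  then show ?thesis using s by simp
qed

lemma borel_measurable_E_op:
  assumes strict: "\<And>u v. u \<in> I \<Longrightarrow> v \<in> I \<Longrightarrow> u < v \<Longrightarrow> 0 < s * (c2 v - c2 u)"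
    and s: "s \<noteq> 0" and I: "connected I" "continuous_on I c2"
    and c1: "c1 \<in> borel_measurable borel" and h: "h \<in> borel_measurable borel"
  shows "E_op I c1 c2 h \<in> borel_measurable lborel"
proof -
  define A where "A = c2 ` I"
  have "is_interval A"
    unfolding A_def using connected_continuous_image[OF I(2,1)] by (simp add: is_interval_connected_1)
  then have A: "A \<in> sets borel" by (rule real_interval_borel_measurable)
  define G where "G y = indicator A y *\<^sub>R inv_into I c2 y" for y
  have G: "G \<in> borel_measurable borel"
    using borel_measurable_inv_into_strict[OF strict s] A
    unfolding G_def A_def by (subst borel_measurable_restrict_space_iff[symmetric]) auto
  have "E_op I c1 c2 h = (\<lambda>x. if snd x \<in> A \<and> 0 \<le> fst x \<and> fst x \<le> c1 (G (snd x))
                              then h (G (snd x)) else 0)"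
    using E_op_eq_inv_into[OF inj_on_if_strict[OF strict]] by (auto simp: A_def G_def fun_eq_iff)
  also have "\<dots> \<in> borel_measurable (borel \<Otimes>\<^sub>M borel)" using A G c1 h by measurable
  finally show ?thesis by (simp add: borel_prod)
qed

lemma E_op_component_le_box:
  assumes cc: "curve_class c1 c2" and I: "I \<in> components (T_sign s c2)"
    and h: "\<And>u. \<bar>h u\<bar> \<le> B" and c1: "\<And>t. t \<in> {0..1} \<Longrightarrow> c1 t \<le> C"
    and M: "\<And>t. t \<in> {0..1} \<Longrightarrow> \<bar>deriv (deriv c2) t\<bar> \<le> M"
  shows "\<bar>E_op I c1 c2 h x\<bar> \<le> B * indicator ({0..C} \<times>
           {c2 (Inf I) - M * (measure lborel I)\<^sup>2 .. c2 (Inf I) + M * (measure lborel I)\<^sup>2}) x"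
proof (cases "\<exists>t\<in>I. c2 t = snd x \<and> 0 \<le> fst x \<and> fst x \<le> c1 t")
  case False
  then have "E_op I c1 c2 h x = 0" unfolding E_op_def by (rule if_not_P)
  then show ?thesis using h[of 0] by simp
next
  case True
  define t where "t = (SOME t. t \<in> I \<and> c2 t = snd x \<and> 0 \<le> fst x \<and> fst x \<le> c1 t)"
  have t: "t \<in> I" "c2 t = snd x" "0 \<le> fst x" "fst x \<le> c1 t"
    using someI_ex[OF True[unfolded Bex_def]] unfolding t_def by blast+
  have E: "E_op I c1 c2 h x = h t" unfolding E_op_def t_def using True by (rule if_P)
  have smooth: "smooth_fun c2" using cc by (simp add: curve_class_def)
  have t01: "t \<in> {0<..<1}" using in_components_subset[OF I] t(1) by (auto simp: T_sign_def)
  note Inf = component_T_sign_Inf[OF cc I]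
  have "Inf I \<le> t" using t(1) bdd_below_component_T_sign[OF I] by (rule cInf_lower)
  have "is_interval I" using in_components_connected[OF I] by (simp add: is_interval_connected_1)
  moreover have "emeasure lborel I < \<infinity>"
  proof -
    have "T_sign s c2 \<in> sets lborel" using open_T_sign[OF smooth] by simp
    then have "emeasure lborel I \<le> emeasure lborel (T_sign s c2)"
      by (rule emeasure_mono[OF in_components_subset[OF I]])
    then show ?thesis using emeasure_T_sign_finite by (rule le_less_trans)
  qed
  ultimately have width: "t - Inf I \<le> measure lborel I"
    using bdd_below_component_T_sign[OF I] t(1) by (rule diff_Inf_le_measure_interval)
  have "\<bar>c2 t - c2 (Inf I)\<bar> \<le> M * (t - Inf I)\<^sup>2"
    using smooth_fun_has_real_derivative[OF smooth, of 0] smooth_fun_has_real_derivative[OF smooth, of 1]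
      Inf(1) \<open>Inf I \<le> t\<close> t01 M
    by (intro abs_diff_le_of_deriv_vanishes[where f' = "deriv c2"]) (auto simp: Inf(2))
  also have "\<dots> \<le> M * (measure lborel I)\<^sup>2"
    using width \<open>Inf I \<le> t\<close> M[of 0] by (intro mult_left_mono power_mono) auto
  finally have "\<bar>snd x - c2 (Inf I)\<bar> \<le> M * (measure lborel I)\<^sup>2" using t(2) by simp
  moreover have "fst x \<le> C" using t(4) c1[of t] t01 by auto
  ultimately have "x \<in> {0..C} \<times> {c2 (Inf I) - M * (measure lborel I)\<^sup>2 .. c2 (Inf I) + M * (measure lborel I)\<^sup>2}"
    using t(3) by (cases x) (auto simp: abs_le_iff)
  then show ?thesis using E h by simp
qed

lemma emeasure_lborel_Icc_times_Icc:
  fixes a b c d :: real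
  assumes "a \<le> b" "c \<le> d"
  shows "emeasure lborel ({a..b} \<times> {c..d}) = ennreal ((b - a) * (d - c))"
proof -
  have "emeasure lborel ({a..b} \<times> {c..d}) = emeasure (lborel \<Otimes>\<^sub>M lborel) ({a..b} \<times> {c..d})"
    by (simp add: lborel_prod)
  also have "\<dots> = emeasure lborel {a..b} * emeasure lborel {c..d}"
    by (rule lborel.emeasure_pair_measure_Times) auto
  also have "\<dots> = ennreal ((b - a) * (d - c))" using assms by (simp add: ennreal_mult)
  finally show ?thesis .
qed

lemma curve_class_bounds:
  assumes "curve_class c1 c2"
  obtains C M where "0 \<le> C" "0 \<le> M" "\<And>t. t \<in> {0..1} \<Longrightarrow> c1 t \<le> C"
    "\<And>t. t \<in> {0..1} \<Longrightarrow> \<bar>deriv (deriv c2) t\<bar> \<le> M"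
proof -
  have smooth: "smooth_fun c1" "smooth_fun c2" using assms by (auto simp: curve_class_def)
  have "isCont c1 t" "isCont (\<lambda>t. \<bar>deriv (deriv c2) t\<bar>) t" for t
    using smooth_fun_continuous_on[OF smooth(1), of UNIV 0] smooth_fun_continuous_on[OF smooth(2), of UNIV 2]
    by (auto simp: continuous_on_eq_continuous_at numeral_2_eq_2 intro!: continuous_intros)
  then obtain C M where "\<forall>t. 0 \<le> t \<and> t \<le> 1 \<longrightarrow> c1 t \<le> C"
    and "\<forall>t. 0 \<le> t \<and> t \<le> 1 \<longrightarrow> \<bar>deriv (deriv c2) t\<bar> \<le> M"
    using isCont_bounded[of 0 1 c1] isCont_bounded[of 0 1 "\<lambda>t. \<bar>deriv (deriv c2) t\<bar>"] by auto
  moreover have "0 < c1 0" using assms by (simp add: curve_class_def)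
  ultimately show ?thesis
    by (intro that[of "max C 0" "max M 0"]) (auto intro: le_max_iff_disj[THEN iffD2])
qed

lemma E_op_components_dominated_by_boxes:
  assumes cc: "curve_class c1 c2" and h: "h \<in> borel_measurable borel" "bounded (range h)"
  obtains B C K where "0 \<le> B" "0 \<le> C" "\<And>I. K I \<in> sets lborel"
    and "\<And>s I. I \<in> insert {} (components (T_sign s c2)) \<Longrightarrow> E_op I c1 c2 h \<in> borel_measurable lborel"
    and "\<And>s I. I \<in> insert {} (components (T_sign s c2)) \<Longrightarrow>
           emeasure lborel (K I) \<le> ennreal (C * (measure lborel I)\<^sup>2)"
    and "\<And>s I x. I \<in> insert {} (components (T_sign s c2)) \<Longrightarrow>
           \<bar>E_op I c1 c2 h x\<bar> \<le> B * indicator (K I) x"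
proof -
  obtain B where B: "\<And>u. \<bar>h u\<bar> \<le> B" using h(2) by (auto simp: bounded_iff)
  obtain Cm M where CM: "0 \<le> Cm" "0 \<le> M" "\<And>t. t \<in> {0..1} \<Longrightarrow> c1 t \<le> Cm"
    "\<And>t. t \<in> {0..1} \<Longrightarrow> \<bar>deriv (deriv c2) t\<bar> \<le> M"
    using curve_class_bounds[OF cc] by blast
  define K where "K I = (if I = {} then {} else
    {0..Cm} \<times> {c2 (Inf I) - M * (measure lborel I)\<^sup>2 .. c2 (Inf I) + M * (measure lborel I)\<^sup>2})" for I
  have smooth: "smooth_fun c1" "smooth_fun c2" using cc by (auto simp: curve_class_def)
  show thesis
  proof (rule that[of B "2 * Cm * M" K])
    show "0 \<le> B" using B[of 0] by simp
    show "0 \<le> 2 * Cm * M" using CM by simp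
    show "K I \<in> sets lborel" for I by (simp add: K_def borel_closed closed_Times)
    fix s I assume I: "I \<in> insert {} (components (T_sign s c2))"
    show "E_op I c1 c2 h \<in> borel_measurable lborel"
    proof (cases "I = {}")
      case False
      with I have comp: "I \<in> components (T_sign s c2)" by simp
      have "s \<noteq> 0" using in_components_nonempty[OF comp] in_components_subset[OF comp]
        by (auto simp: T_sign_def)
      then show ?thesis
        using T_sign_component_strict[OF smooth(2) comp] in_components_connected[OF comp]
          smooth_fun_continuous_on[OF smooth(2), of I 0] smooth_fun_continuous_on[OF smooth(1), of UNIV 0] h(1)
        by (intro borel_measurable_E_op[where s = s]) (auto intro: borel_measurable_continuous_onI)
    qed (simp add: E_op_empty)
    show "emeasure lborel (K I) \<le> ennreal (2 * Cm * M * (measure lborel I)\<^sup>2)"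
      using CM by (simp add: K_def emeasure_lborel_Icc_times_Icc algebra_simps)
    show "\<bar>E_op I c1 c2 h x\<bar> \<le> B * indicator (K I) x" for x
    proof (cases "I = {}")
      case False
      with I have "I \<in> components (T_sign s c2)" by simp
      from E_op_component_le_box[OF cc this B CM(3,4)] False show ?thesis by (simp add: K_def)
    qed (simp add: E_op_empty K_def)
  qed
qed

lemma sum_E_op_restrict:
  fixes n :: nat
  shows "(\<Sum>i\<in>{i. i < n \<and> P i}. E_op (I i) c1 c2 h x) = (\<Sum>i<n. E_op (if P i then I i else {}) c1 c2 h x)"
proof -
  have "(\<Sum>i\<in>{i. i < n \<and> P i}. E_op (I i) c1 c2 h x) = (\<Sum>i\<in>{..<n} \<inter> {i. P i}. E_op (I i) c1 c2 h x)"
    by (rule sum.cong) auto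
  also have "\<dots> = (\<Sum>i<n. if i \<in> {i. P i} then E_op (I i) c1 c2 h x else 0)"
    by (rule sum.inter_restrict) simp
  also have "\<dots> = (\<Sum>i<n. E_op (if P i then I i else {}) c1 c2 h x)"
    by (rule sum.cong) (simp_all add: E_op_empty)
  finally show ?thesis .
qed

text \<open>Indices beyond N_\<plusminus> are sent to the empty interval, on which E_op vanishes.\<close>

lemma component_enumeration_extended:
  assumes "bij_betw I J (components S)"
  shows "(if i \<in> J then I i else {}) \<in> insert {} (components S)"
  using assms by (auto simp: bij_betw_def)

lemma L2_limit_of_E_op_series:
  assumes cc: "curve_class c1 c2" and h: "h \<in> borel_measurable borel" "bounded (range h)"
    and Jp: "\<And>i. Jp i \<in> insert {} (components (T_sign 1 c2))" "summable (\<lambda>i. measure lborel (Jp i))"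
    and Jm: "\<And>i. Jm i \<in> insert {} (components (T_sign (-1) c2))" "summable (\<lambda>i. measure lborel (Jm i))"
  shows "\<exists>F. L2_fun F \<and>
           L2_tendsto (\<lambda>n x. (\<Sum>i<n. E_op (Jp i) c1 c2 h x) - (\<Sum>i<n. E_op (Jm i) c1 c2 h x)) F"
proof -
  obtain B C K where BCK: "0 \<le> B" "0 \<le> C" "\<And>I. K I \<in> sets lborel"
    "\<And>s I. I \<in> insert {} (components (T_sign s c2)) \<Longrightarrow> E_op I c1 c2 h \<in> borel_measurable lborel"
    "\<And>s I. I \<in> insert {} (components (T_sign s c2)) \<Longrightarrow>
       emeasure lborel (K I) \<le> ennreal (C * (measure lborel I)\<^sup>2)"
    "\<And>s I x. I \<in> insert {} (components (T_sign s c2)) \<Longrightarrow> \<bar>E_op I c1 c2 h x\<bar> \<le> B * indicator (K I) x"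
    using E_op_components_dominated_by_boxes[OF cc h] by blast
  show ?thesis
    unfolding L2_fun_def L2_tendsto_def conj_assoc
    by (rule L2_limit_of_difference_of_set_dominated_series[OF BCK(4)[OF Jp(1)] BCK(4)[OF Jm(1)]
        BCK(6)[OF Jp(1)] BCK(6)[OF Jm(1)] BCK(3) BCK(3) BCK(5)[OF Jp(1)] BCK(5)[OF Jm(1)]
        measure_nonneg measure_nonneg Jp(2) Jm(2) BCK(1,2)])
qed

theorem lemma6p1:
  fixes c1 c2 h :: "real \<Rightarrow> real"
    and Ip Im :: "nat \<Rightarrow> real set"
    and Np Nm :: enat
  assumes "curve_class c1 c2"
    and "h \<in> borel_measurable borel"
    and "bounded (range h)"
    and "bij_betw Ip {i. enat i < Np} (components (T_plus c2))"
    and "bij_betw Im {i. enat i < Nm} (components (T_minus c2))"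
  shows "\<exists>F. L2_fun F \<and>
           L2_tendsto
             (\<lambda>n x. (\<Sum>i\<in>{i. i < n \<and> enat i < Np}. E_op (Ip i) c1 c2 h x)
                   - (\<Sum>i\<in>{i. i < n \<and> enat i < Nm}. E_op (Im i) c1 c2 h x)) F"
proof -
  have bij: "bij_betw Ip {i. enat i < Np} (components (T_sign 1 c2))"
    "bij_betw Im {i. enat i < Nm} (components (T_sign (-1) c2))"
    using assms(4,5) by (simp_all add: T_plus_eq_T_sign T_minus_eq_T_sign)
  have smooth: "smooth_fun c2" using assms(1) by (simp add: curve_class_def)
  note summable = summable_measure_components[OF open_T_sign[OF smooth] emeasure_T_sign_finite]
  have "\<exists>F. L2_fun F \<and> L2_tendsto (\<lambda>n x.
      (\<Sum>i<n. E_op (if i \<in> {i. enat i < Np} then Ip i else {}) c1 c2 h x)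
    - (\<Sum>i<n. E_op (if i \<in> {i. enat i < Nm} then Im i else {}) c1 c2 h x)) F"
    using assms(1-3) component_enumeration_extended[OF bij(1)] summable[OF bij(1)]
      component_enumeration_extended[OF bij(2)] summable[OF bij(2)]
    by (rule L2_limit_of_E_op_series)
  then show ?thesis by (simp add: sum_E_op_restrict)
qed

end
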